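(* Let $\{X_i,i\in I\}$ be a family of random variables and $L$ a slowly varying function on $[0,\infty)$ which is positive, continuous on $[0,\infty)$, differentiable on $[A,\infty)$ for some $A>0$, and satisfies $\lim_{x\to\infty}xL'(x)/L(x)=0$. If for some $p>0$, $$\sup_{i\in I}\mathbb{E}\left(|X_i|^pL(|X_i|)\log(|X_i|)\log^2(\log(|X_i|))\right)<\infty,$$ then there exists a nonnegative random variable $X$ with distribution function $F(x)=1-\sup_{i\in I}\mathbb{P}(|X_i|>x)$, $x\in\mathbb{R}$, such that $\{X_i,i\in I\}$ is stochastically dominated by $X$ and $\mathbb{E}\left(X^pL(X)\right)<\infty$.
   Context: $\log(x)$ denotes the natural logarithm of $\max\{x,e\}$, $x\ge0$. A function $L$ is slowly varying if it is positive and measurable on $[A,\infty)$ for some $A>0$ and $\lim_{x\to\infty}L(\lambda x)/L(x)=1$ for each $\lambda>0$. A family $\{X_i,i\in I\}$ is stochastically dominated by a random variable $X$ if $\sup_{i\in I}\mathbb{P}(|X_i|>t)\le\mathbb{P}(|X|>t)$ for all $t\ge0$. *)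

theory Defs
  imports "HOL-Probability.Probability"
begin

text \<open>The paper's logarithm: natural log of max(x, e).\<close>
definition Log :: "real \<Rightarrow> real" where
  "Log x = ln (max x (exp 1))"

definition slowly_varying :: "(real \<Rightarrow> real) \<Rightarrow> bool" where
  "slowly_varying L \<longleftrightarrow>
     (\<exists>A>0. (\<forall>x\<ge>A. L x > 0) \<and> L \<in> borel_measurable (restrict_space borel {A..})) \<and>
     (\<forall>c>0. ((\<lambda>x. L (c * x) / L x) \<longlongrightarrow> 1) at_top)"

definition stoch_dominated ::
    "'a measure \<Rightarrow> 'i set \<Rightarrow> ('i \<Rightarrow> 'a \<Rightarrow> real) \<Rightarrow> 'b measure \<Rightarrow> ('b \<Rightarrow> real) \<Rightarrow> bool" where
  "stoch_dominated M I X N Y \<longleftrightarrow>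
     (\<forall>t\<ge>0. (SUP i\<in>I. measure M {\<omega>\<in>space M. \<bar>X i \<omega>\<bar> > t})
              \<le> measure N {\<omega>\<in>space N. \<bar>Y \<omega>\<bar> > t})"

end

theory Submission
  imports Defs
begin

text \<open>
  The tail T(x) = sup i P(|X i| > x) is nonincreasing, right-continuous and equal to 1
  for x < 0.  Markov's inequality applied to the moment condition gives
  T(x) <= S / (x^p L(x) log x (log log x)^2) for large x, so T tends to 0 and is the
  tail of a nonnegative random variable Y.  To integrate x^p L(x) against the law of Y,
  split the half-line into the shells (e^m, e^(m+1)]: as L is slowly varying, x^p L(x)
  changes by at most a constant factor across a shell, so shell m contributes
  O(1 / (m (log m)^2)), a convergent series.  Eventual monotonicity of x^p L(x), needed
  for Markov's inequality, follows from x L'(x) / L(x) tending to 0.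
\<close>

lemma summable_inverse_mult_ln_plus_one_squared:
  "summable (\<lambda>m::nat. 1 / (real m * (ln (real m) + 1)^2))"
proof (subst condensation_test)
  show "1 / (real (Suc m) * (ln (real (Suc m)) + 1)^2) \<le> 1 / (real m * (ln (real m) + 1)^2)"
    if "0 < m" for m
  proof -
    have "0 \<le> ln (real m)" "ln (real m) \<le> ln (real (Suc m))" using that by simp_all
    then have "real m * (ln (real m) + 1)^2 \<le> real (Suc m) * (ln (real (Suc m)) + 1)^2"
      by (intro mult_mono power_mono) auto
    moreover have "0 < real m * (ln (real m) + 1)^2"
      using that \<open>0 \<le> ln (real m)\<close> by (intro mult_pos_pos zero_less_power add_nonneg_pos) auto
    ultimately show ?thesis by (intro divide_left_mono) auto
  qed
  show "0 \<le> 1 / (real n * (ln (real n) + 1)^2)" for n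
    by (cases "n = 0") (auto intro!: divide_nonneg_pos add_nonneg_pos)
  have "summable (\<lambda>n::nat. inverse (real (Suc n) ^ 2))"
    using inverse_power_summable[of 2, where 'a = real] by (subst summable_Suc_iff) auto
  then have "summable (\<lambda>n::nat. 1 / (ln 2)^2 * (1 / (real n + 1)^2))"
    by (intro summable_mult) (simp add: inverse_eq_divide add.commute)
  then show "summable (\<lambda>n::nat. 2^n * (1 / (real (2^n) * (ln (real (2^n)) + 1)^2)))"
  proof (rule summable_comparison_test'[where N = 0])
    fix n :: nat
    have ln2: "0 < ln (2::real)" "ln (2::real) < 1" using ln_2_less_1 by auto
    then have "(ln 2 * (real n + 1))^2 \<le> (real n * ln 2 + 1)^2"
      by (intro power_mono) (auto simp: algebra_simps)
    then have "1 / (real n * ln 2 + 1)^2 \<le> 1 / (ln 2 * (real n + 1))^2"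
      using ln2 by (intro divide_left_mono) (auto intro!: mult_pos_pos zero_less_power add_nonneg_pos)
    then show "norm (2^n * (1 / (real (2^n) * (ln (real (2^n)) + 1)^2)))
        \<le> 1 / (ln 2)^2 * (1 / (real n + 1)^2)"
      by (simp add: ln_realpow power_mult_distrib)
  qed
qed

lemma inverse_mult_ln_squared_le:
  fixes m :: real
  assumes "exp 1 \<le> m"
  shows "1 / (m * (ln m)^2) \<le> 4 / (m * (ln m + 1)^2)"
proof -
  have "1 \<le> ln m" using assms by (subst ln_ge_iff) (auto intro: less_le_trans[of 0 "exp 1"])
  have "0 < m" using assms by (auto intro: less_le_trans[of 0 "exp 1"])
  have "(ln m + 1)^2 \<le> (2 * ln m)^2" using \<open>1 \<le> ln m\<close> by (intro power_mono) auto
  then have "4 / (m * (2 * ln m)^2) \<le> 4 / (m * (ln m + 1)^2)"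
    using \<open>0 < m\<close> \<open>1 \<le> ln m\<close> by (intro divide_left_mono mult_left_mono mult_pos_pos) auto
  then show ?thesis by (simp add: power_mult_distrib)
qed

lemma exists_exp_shell:
  fixes y :: real and m0 :: nat
  assumes "exp (real m0) < y"
  obtains k where "exp (real (m0 + k)) < y" "y \<le> exp (real (m0 + k + 1))"
proof -
  have "0 < y" using assms exp_gt_zero[of "real m0"] by linarith
  have "real m0 < ln y" using assms \<open>0 < y\<close> ln_less_cancel_iff[of "exp (real m0)" y] by simp
  define m where "m = nat (\<lceil>ln y\<rceil> - 1)"
  have "of_int \<lceil>ln y\<rceil> - 1 < ln y" "ln y \<le> of_int \<lceil>ln y\<rceil>" by linarith+
  moreover have "real m = of_int \<lceil>ln y\<rceil> - 1" "m0 \<le> m"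
    using \<open>real m0 < ln y\<close> unfolding m_def by linarith+
  ultimately have "real m < ln y" "ln y \<le> real m + 1" "m0 + (m - m0) = m" by linarith+
  then show ?thesis
    using that[of "m - m0"] \<open>0 < y\<close> exp_less_cancel_iff[of "real m" "ln y"] exp_le_cancel_iff[of "ln y" "real m + 1"]
    by (simp add: add.commute)
qed

lemma (in prob_space) nn_integral_le_sum_exp_shells:
  fixes Y :: "'a \<Rightarrow> real" and h :: "real \<Rightarrow> real" and m0 :: nat
  assumes Y: "Y \<in> borel_measurable M" "\<And>\<omega>. \<omega> \<in> space M \<Longrightarrow> 0 \<le> Y \<omega>"
    and bounded: "\<And>y. 0 \<le> y \<Longrightarrow> y \<le> exp (real m0) \<Longrightarrow> h y \<le> K"
    and mono: "\<And>x y. exp (real m0) \<le> x \<Longrightarrow> x \<le> y \<Longrightarrow> h x \<le> h y"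
  shows "(\<integral>\<^sup>+ \<omega>. ennreal (h (Y \<omega>)) \<partial>M)
    \<le> ennreal K + (\<Sum>k. ennreal (h (exp (real (m0 + k + 1))))
                        * emeasure M {\<omega>\<in>space M. exp (real (m0 + k)) < Y \<omega>})"
proof -
  define E where "E k = {\<omega>\<in>space M. exp (real (m0 + k)) < Y \<omega>}" for k
  define a where "a k = ennreal (h (exp (real (m0 + k + 1))))" for k
  have E: "E k \<in> events" for k unfolding E_def using Y(1) by measurable
  have "ennreal (h (Y \<omega>)) \<le> ennreal K + (\<Sum>k. a k * indicator (E k) \<omega>)" if "\<omega> \<in> space M" for \<omega>
  proof (cases "Y \<omega> \<le> exp (real m0)")
    case True
    then show ?thesis using bounded Y(2) that by (intro add_increasing2 ennreal_leI) auto
  next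
    case False
    then have "exp (real m0) < Y \<omega>" by simp
    then obtain k where k: "exp (real (m0 + k)) < Y \<omega>" "Y \<omega> \<le> exp (real (m0 + k + 1))"
      by (rule exists_exp_shell)
    have "h (Y \<omega>) \<le> h (exp (real (m0 + k + 1)))" using False k(2) by (intro mono) auto
    then have "ennreal (h (Y \<omega>)) \<le> a k * indicator (E k) \<omega>"
      using k(1) that by (simp add: a_def E_def ennreal_leI)
    also have "\<dots> \<le> (\<Sum>k. a k * indicator (E k) \<omega>)"
      using sum_le_suminf[OF summableI, of "{k}"] by simp
    finally show ?thesis by (rule add_increasing[OF zero_le])
  qed
  then have "(\<integral>\<^sup>+ \<omega>. ennreal (h (Y \<omega>)) \<partial>M)
      \<le> (\<integral>\<^sup>+ \<omega>. ennreal K + (\<Sum>k. a k * indicator (E k) \<omega>) \<partial>M)"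
    by (rule nn_integral_mono)
  also have "\<dots> = (\<integral>\<^sup>+ \<omega>. ennreal K \<partial>M)
      + (\<integral>\<^sup>+ \<omega>. (\<Sum>k. a k * indicator (E k) \<omega>) \<partial>M)"
    using E by (intro nn_integral_add) auto
  also have "\<dots> = ennreal K + (\<Sum>k. a k * emeasure M (E k))"
    using E by (simp add: nn_integral_suminf nn_integral_cmult_indicator emeasure_space_1)
  finally show ?thesis by (simp add: a_def E_def)
qed

lemma (in prob_space) continuous_at_right_prob_greater:
  fixes Z :: "'a \<Rightarrow> real"
  assumes "Z \<in> borel_measurable M"
  shows "continuous (at_right a) (\<lambda>x. prob {\<omega>\<in>space M. x < Z \<omega>})"
proof -
  define D where "D = distr M borel Z"
  have "real_distribution D" unfolding D_def using assms by (rule real_distribution_distr)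
  then have "continuous (at_right a) (\<lambda>x. 1 - cdf D x)"
    by (intro continuous_intros finite_borel_measure.cdf_is_right_cont
        real_distribution.finite_borel_measure_M)
  moreover have "prob {\<omega>\<in>space M. x < Z \<omega>} = 1 - cdf D x" for x
  proof -
    have "{\<omega>\<in>space M. x < Z \<omega>} = space M - (Z -` {..x} \<inter> space M)" by auto
    moreover have "Z -` {..x} \<inter> space M \<in> events" using assms by measurable
    ultimately show ?thesis
      unfolding cdf_def D_def using assms by (simp add: measure_distr prob_compl)
  qed
  ultimately show ?thesis by simp
qed

lemma exists_nonneg_random_variable_with_tail:
  fixes T :: "real \<Rightarrow> real"
  assumes antimono: "\<And>x y. x \<le> y \<Longrightarrow> T y \<le> T x"
    and right_cont: "\<And>a. continuous (at_right a) T"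
    and neg: "\<And>x. x < 0 \<Longrightarrow> T x = 1"
    and top: "(T \<longlongrightarrow> 0) at_top"
  obtains N :: "real measure" and Y :: "real \<Rightarrow> real"
  where "prob_space N" "Y \<in> borel_measurable N" "\<And>\<omega>. \<omega> \<in> space N \<Longrightarrow> 0 \<le> Y \<omega>"
    "\<And>x. measure N {\<omega>\<in>space N. Y \<omega> \<le> x} = 1 - T x"
    "\<And>x. measure N {\<omega>\<in>space N. x < Y \<omega>} = T x"
proof
  define F where "F x = 1 - T x" for x
  define N where "N = interval_measure F"
  have "(F \<longlongrightarrow> 0) at_bot"
    by (rule tendsto_eventually) (auto simp: F_def neg eventually_at_bot_linorder intro!: exI[of _ "-1"])
  moreover have "(F \<longlongrightarrow> 1) at_top"
    unfolding F_def using tendsto_diff[OF tendsto_const top, of 1] by simp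
  moreover have "continuous (at_right a) F" for a
    unfolding F_def by (intro continuous_intros right_cont)
  moreover have F_mono: "F x \<le> F y" if "x \<le> y" for x y
    using antimono[OF that] by (simp add: F_def)
  ultimately interpret N: real_distribution N
    unfolding N_def by (intro real_distribution_interval_measure) auto
  have N_le: "measure N {..x} = F x" for x
    unfolding N_def by (rule measure_interval_measure_Iic) (use F_mono \<open>\<And>a. continuous (at_right a) F\<close>
        \<open>(F \<longlongrightarrow> 0) at_bot\<close> in auto)
  show "prob_space N" by (rule N.prob_space_axioms)
  show "(\<lambda>\<omega>. max 0 \<omega>) \<in> borel_measurable N" by (rule N.measurable_finite_borel) measurable
  show "0 \<le> max 0 \<omega>" for \<omega> :: real by simp
  show "measure N {\<omega>\<in>space N. max 0 \<omega> \<le> x} = 1 - T x" for x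
  proof (cases "x < 0")
    case True
    then have "{\<omega>\<in>space N. max 0 \<omega> \<le> x} = {}" by auto
    then show ?thesis by (simp only:) (simp add: neg[OF True])
  next
    case False
    then have "{\<omega>\<in>space N. max 0 \<omega> \<le> x} = {..x}" by auto
    then show ?thesis by (simp add: N_le F_def)
  qed
  show "measure N {\<omega>\<in>space N. x < max 0 \<omega>} = T x" for x
  proof (cases "x < 0")
    case True
    then have "{\<omega>\<in>space N. x < max 0 \<omega>} = space N" by auto
    then show ?thesis using neg[OF True] N.prob_space by simp
  next
    case False
    then have "{\<omega>\<in>space N. x < max 0 \<omega>} = space N - {..x}" by auto
    then show ?thesis using N.prob_compl[of "{..x}"] by (simp add: N_le F_def)
  qed
qed

lemma powr_mult_eventually_mono:
  fixes L :: "real \<Rightarrow> real" and A p :: real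
  assumes pos: "\<And>x. x \<ge> 0 \<Longrightarrow> L x > 0"
    and diff: "\<And>x. x \<ge> A \<Longrightarrow> L differentiable (at x)"
    and lim: "((\<lambda>x. x * deriv L x / L x) \<longlongrightarrow> 0) at_top" and "p > 0"
  obtains B where "B > 0" "\<And>x y. B \<le> x \<Longrightarrow> x \<le> y \<Longrightarrow> x powr p * L x \<le> y powr p * L y"
proof -
  have "eventually (\<lambda>x. - p < x * deriv L x / L x) at_top"
    using \<open>p > 0\<close> by (intro order_tendstoD(1)[OF lim]) auto
  then obtain B0 where B0: "\<And>x. x \<ge> B0 \<Longrightarrow> - p < x * deriv L x / L x"
    by (auto simp: eventually_at_top_linorder)
  define B where "B = max (max A B0) 1"
  have "\<exists>d. ((\<lambda>z. z powr p * L z) has_real_derivative d) (at z) \<and> d > 0" if "z \<ge> B" for z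
  proof -
    have z: "z > 0" "z \<ge> A" "z \<ge> B0" "L z > 0" using that pos by (auto simp: B_def)
    have "(L has_real_derivative deriv L z) (at z)"
      using diff[OF z(2)] DERIV_deriv_iff_real_differentiable by blast
    then have "((\<lambda>z. z powr p * L z) has_real_derivative
               z powr (p - 1) * (p * L z + z * deriv L z)) (at z)"
      using DERIV_mult[OF has_real_derivative_powr[OF z(1), of p]] z(1)
      by (simp add: powr_diff algebra_simps)
    moreover have "p * L z + z * deriv L z > 0"
      using B0[OF z(3)] z(4) by (simp add: field_simps)
    ultimately show ?thesis
      using z(1) by (intro exI[of _ "z powr (p - 1) * (p * L z + z * deriv L z)"]) auto
  qed
  then have "x powr p * L x \<le> y powr p * L y" if "B \<le> x" "x \<le> y" for x y
    using that DERIV_pos_imp_increasing[of x y "\<lambda>z. z powr p * L z"]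
    by (cases "x = y") (auto simp: less_le)
  then show ?thesis by (intro that[of B]) (auto simp: B_def)
qed

lemma Log_ge_1: "1 \<le> Log x"
  unfolding Log_def by (subst ln_ge_iff) (auto simp: less_max_iff_disj)

lemma Log_mono: "x \<le> y \<Longrightarrow> Log x \<le> Log y"
  unfolding Log_def by (subst ln_le_cancel_iff) (auto simp: less_max_iff_disj)

lemma Log_eq_ln: "exp 1 \<le> x \<Longrightarrow> Log x = ln x"
  unfolding Log_def by (simp add: max_def)

lemma ln_le_Log: "0 < x \<Longrightarrow> ln x \<le> Log x"
  unfolding Log_def by (subst ln_le_cancel_iff) auto

definition moment_weight :: "real \<Rightarrow> (real \<Rightarrow> real) \<Rightarrow> real \<Rightarrow> real" where
  "moment_weight p L x = x powr p * L x * Log x * (Log (Log x))\<^sup>2"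

lemma moment_weight_pos: "0 < x \<Longrightarrow> 0 < L x \<Longrightarrow> 0 < moment_weight p L x"
  unfolding moment_weight_def using Log_ge_1[of x] Log_ge_1[of "Log x"] by simp

lemma moment_weight_exp:
  assumes "exp 1 \<le> m"
  shows "moment_weight p L (exp m) = exp m powr p * L (exp m) * m * (ln m)\<^sup>2"
proof -
  have "1 \<le> m" using assms exp_ge_add_one_self[of 1] by linarith
  then have "Log (exp m) = m" by (simp add: Log_eq_ln)
  with assms show ?thesis unfolding moment_weight_def by (simp add: Log_eq_ln)
qed

lemma exp_shell_term_le:
  fixes L :: "real \<Rightarrow> real" and m p P S :: real
  assumes m: "exp 1 \<le> m" and L_pos: "0 < L (exp m)"
    and L_doubling: "L (exp (m + 1)) \<le> 2 * L (exp m)"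
    and tail: "P * moment_weight p L (exp m) \<le> S" and "0 \<le> P"
  shows "exp (m + 1) powr p * L (exp (m + 1)) * P \<le> 8 * exp p * S * (1 / (m * (ln m + 1)^2))"
proof -
  have "0 < m" "0 < ln m" using m exp_ge_add_one_self[of 1] by (simp_all add: ln_gt_zero)
  then have "0 < m * (ln m)^2" by simp
  have weight: "moment_weight p L (exp m) = exp m powr p * L (exp m) * (m * (ln m)^2)"
    using moment_weight_exp[OF m] by simp
  then have "0 \<le> S" using tail \<open>0 \<le> P\<close> \<open>0 < m * (ln m)^2\<close> L_pos
    by (smt (verit) mult_nonneg_nonneg powr_ge_zero)
  have "exp (m + 1) powr p = exp p * exp m powr p"
    by (simp add: powr_def mult_exp_exp algebra_simps)
  then have "exp (m + 1) powr p * L (exp (m + 1)) \<le> exp p * exp m powr p * (2 * L (exp m))"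
    using L_doubling by (simp add: mult_left_mono)
  then have "exp (m + 1) powr p * L (exp (m + 1)) * P \<le> 2 * exp p * (exp m powr p * L (exp m)) * P"
    using \<open>0 \<le> P\<close> by (intro mult_right_mono) (simp_all add: algebra_simps)
  also have "\<dots> = 2 * exp p * (P * moment_weight p L (exp m)) / (m * (ln m)^2)"
    using \<open>0 < m\<close> \<open>0 < ln m\<close> by (simp add: weight)
  also have "\<dots> \<le> 2 * exp p * S / (m * (ln m)^2)"
    using tail \<open>0 < m * (ln m)^2\<close> by (intro divide_right_mono mult_left_mono) auto
  also have "\<dots> = 2 * exp p * S * (1 / (m * (ln m)^2))" by simp
  also have "\<dots> \<le> 2 * exp p * S * (4 / (m * (ln m + 1)^2))"
    using inverse_mult_ln_squared_le[OF m] \<open>0 \<le> S\<close> by (intro mult_left_mono) auto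
  finally show ?thesis by simp
qed

locale powr_mult_increasing_from =
  fixes L :: "real \<Rightarrow> real" and p B :: real
  assumes L_pos: "\<And>x. x \<ge> 0 \<Longrightarrow> L x > 0" and B_pos: "B > 0"
    and powr_mult_mono: "\<And>x y. B \<le> x \<Longrightarrow> x \<le> y \<Longrightarrow> x powr p * L x \<le> y powr p * L y"
begin

lemma moment_weight_mono:
  assumes "B \<le> x" "x \<le> y"
  shows "moment_weight p L x \<le> moment_weight p L y"
proof -
  have "0 \<le> y powr p * L y" using L_pos[of y] B_pos assms by simp
  have "x powr p * L x * Log x \<le> y powr p * L y * Log y"
    by (rule mult_mono[OF powr_mult_mono[OF assms] Log_mono[OF assms(2)]])
      (use Log_ge_1[of x] \<open>0 \<le> y powr p * L y\<close> in auto)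
  moreover have "(Log (Log x))\<^sup>2 \<le> (Log (Log y))\<^sup>2"
    using Log_mono[OF Log_mono[OF assms(2)]] Log_ge_1[of "Log x"] by (intro power_mono) auto
  ultimately show ?thesis unfolding moment_weight_def
    by (rule mult_mono) (use \<open>0 \<le> y powr p * L y\<close> Log_ge_1[of y] in auto)
qed

lemma filterlim_moment_weight_at_top: "filterlim (moment_weight p L) at_top at_top"
proof (rule filterlim_at_top_mono)
  have "0 < B powr p * L B" using L_pos[of B] B_pos by simp
  then show "filterlim (\<lambda>x. B powr p * L B * ln x) at_top at_top"
    by (intro filterlim_tendsto_pos_mult_at_top[OF tendsto_const _ ln_at_top])
  show "\<forall>\<^sub>F x in at_top. B powr p * L B * ln x \<le> moment_weight p L x"
    unfolding eventually_at_top_linorder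
  proof (intro exI[of _ B] allI impI)
    fix x assume "B \<le> x"
    have "B powr p * L B * ln x \<le> B powr p * L B * Log x"
      using B_pos \<open>B \<le> x\<close> L_pos[of B] ln_le_Log[of x] by (intro mult_left_mono) auto
    also have "\<dots> \<le> x powr p * L x * Log x"
      using \<open>B \<le> x\<close> Log_ge_1[of x] by (intro mult_right_mono powr_mult_mono) auto
    also have "\<dots> \<le> moment_weight p L x"
    proof -
      have "0 \<le> x powr p * L x * Log x"
        using \<open>B \<le> x\<close> B_pos L_pos[of x] Log_ge_1[of x] by simp
      moreover have "1 \<le> (Log (Log x))\<^sup>2" using Log_ge_1[of "Log x"] by (simp add: one_le_power)
      ultimately have "x powr p * L x * Log x * 1 \<le> x powr p * L x * Log x * (Log (Log x))\<^sup>2"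
        by (intro mult_left_mono)
      then show ?thesis unfolding moment_weight_def by (simp only: mult_1_right)
    qed
    finally show "B powr p * L B * ln x \<le> moment_weight p L x" .
  qed
qed

end

lemma slowly_varying_eventually_less:
  assumes "slowly_varying L" "0 < c" "1 < r"
  shows "\<forall>\<^sub>F x in at_top. L (c * x) < r * L x"
proof -
  obtain A where "\<And>x. x \<ge> A \<Longrightarrow> L x > 0" using assms(1) unfolding slowly_varying_def by blast
  then have "\<forall>\<^sub>F x in at_top. L x > 0" unfolding eventually_at_top_linorder by blast
  moreover have "((\<lambda>x. L (c * x) / L x) \<longlongrightarrow> 1) at_top"
    using assms(1,2) unfolding slowly_varying_def by blast
  then have "\<forall>\<^sub>F x in at_top. L (c * x) / L x < r" using assms(3) by (rule order_tendstoD(2))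
  ultimately show ?thesis by eventually_elim (simp add: divide_less_eq)
qed

lemma bounded_powr_mult_on_Icc:
  fixes L :: "real \<Rightarrow> real"
  assumes "continuous_on {0..} L" "\<And>x. x \<ge> 0 \<Longrightarrow> L x > 0" "p \<ge> 0"
  obtains K where "\<And>y. 0 \<le> y \<Longrightarrow> y \<le> b \<Longrightarrow> y powr p * L y \<le> K"
proof -
  have "continuous_on {0..max 0 b} L" by (rule continuous_on_subset[OF assms(1)]) auto
  from continuous_attains_sup[OF compact_Icc _ this]
  obtain c where c: "\<And>y. y \<in> {0..max 0 b} \<Longrightarrow> L y \<le> L c" by force
  show ?thesis
  proof
    show "y powr p * L y \<le> max 0 b powr p * L c" if "0 \<le> y" "y \<le> b" for y
      using c[of y] that assms(2)[of y] \<open>p \<ge> 0\<close> by (intro mult_mono powr_mono2) auto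
  qed
qed

lemma (in prob_space) nn_integral_powr_mult_finite_if_tail_bound:
  fixes Y :: "'a \<Rightarrow> real" and L :: "real \<Rightarrow> real" and p B S :: real
  assumes Y: "Y \<in> borel_measurable M" "\<And>\<omega>. \<omega> \<in> space M \<Longrightarrow> 0 \<le> Y \<omega>"
    and slow: "slowly_varying L" and L_pos: "\<And>x. x \<ge> 0 \<Longrightarrow> L x > 0"
    and L_cont: "continuous_on {0..} L" and "p \<ge> 0"
    and powr_mult_mono: "\<And>x y. B \<le> x \<Longrightarrow> x \<le> y \<Longrightarrow> x powr p * L x \<le> y powr p * L y"
    and tail: "\<And>x. B \<le> x \<Longrightarrow> prob {\<omega>\<in>space M. x < Y \<omega>} * moment_weight p L x \<le> S"
  shows "(\<integral>\<^sup>+ \<omega>. ennreal (Y \<omega> powr p * L (Y \<omega>)) \<partial>M) < \<infinity>"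
proof -
  define h where "h y = y powr p * L y" for y
  obtain Z where Z: "\<And>x. x \<ge> Z \<Longrightarrow> L (exp 1 * x) < 2 * L x"
    using slowly_varying_eventually_less[OF slow, of "exp 1" 2] by (auto simp: eventually_at_top_linorder)
  define m0 :: nat where "m0 = nat \<lceil>max B Z\<rceil> + 3"
  have "max B Z \<le> real m0" "real m0 \<le> exp (real m0)"
    using exp_ge_add_one_self[of "real m0"] unfolding m0_def by linarith+
  then have m0: "B \<le> exp (real m0)" "Z \<le> exp (real m0)" "exp 1 \<le> real m0"
    using exp_le unfolding m0_def by linarith+
  obtain K where h_bounded: "\<And>y. 0 \<le> y \<Longrightarrow> y \<le> exp (real m0) \<Longrightarrow> h y \<le> K"
    by (rule bounded_powr_mult_on_Icc[where b = "exp (real m0)"]) (use L_cont L_pos \<open>p \<ge> 0\<close> in \<open>auto simp: h_def\<close>)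
  have "0 \<le> S"
  proof -
    have "0 < moment_weight p L (exp (real m0))" using L_pos by (intro moment_weight_pos) auto
    then show ?thesis using order.trans[OF mult_nonneg_nonneg[OF measure_nonneg] tail[OF m0(1)]] by simp
  qed
  define bnd where "bnd k = 8 * exp p * S * (1 / (real (m0 + k) * (ln (real (m0 + k)) + 1)^2))" for k
  have shell_le: "h (exp (real (m0 + k + 1))) * prob {\<omega>\<in>space M. exp (real (m0 + k)) < Y \<omega>} \<le> bnd k"
    for k
  proof -
    have m: "exp 1 \<le> real (m0 + k)" and x: "B \<le> exp (real (m0 + k))" "Z \<le> exp (real (m0 + k))"
      using m0 by (auto intro: order.trans)
    have "exp (real (m0 + k) + 1) = exp 1 * exp (real (m0 + k))" by (simp add: exp_add)
    then have "L (exp (real (m0 + k) + 1)) \<le> 2 * L (exp (real (m0 + k)))"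
      using less_imp_le[OF Z[OF x(2)]] by simp
    from exp_shell_term_le[OF m _ this tail[OF x(1)]] show ?thesis
      using L_pos by (simp add: h_def bnd_def add_ac)
  qed
  have "summable (\<lambda>k. 1 / (real (m0 + k) * (ln (real (m0 + k)) + 1)^2))"
    using summable_iff_shift[where f = "\<lambda>m. 1 / (real m * (ln (real m) + 1)^2)" and k = m0]
      summable_inverse_mult_ln_plus_one_squared by (simp add: add.commute)
  then have "summable bnd" unfolding bnd_def[abs_def] by (rule summable_mult)
  have bnd_nonneg: "0 \<le> bnd k" for k using \<open>0 \<le> S\<close> by (simp add: bnd_def)
  have "(\<integral>\<^sup>+ \<omega>. ennreal (h (Y \<omega>)) \<partial>M)
      \<le> ennreal K
        + (\<Sum>k. ennreal (h (exp (real (m0 + k + 1))))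
                * emeasure M {\<omega>\<in>space M. exp (real (m0 + k)) < Y \<omega>})"
    by (rule nn_integral_le_sum_exp_shells[OF Y h_bounded])
      (auto simp: h_def intro: powr_mult_mono order.trans[OF m0(1)])
  also have "\<dots> \<le> ennreal K + (\<Sum>k. ennreal (bnd k))"
  proof (intro add_left_mono suminf_le summableI)
    fix k
    have "0 \<le> h (exp (real (m0 + k + 1)))" using L_pos[of "exp (real (m0 + k + 1))"] by (simp add: h_def)
    then show "ennreal (h (exp (real (m0 + k + 1))))
        * emeasure M {\<omega>\<in>space M. exp (real (m0 + k)) < Y \<omega>} \<le> ennreal (bnd k)"
      using shell_le[of k] by (simp add: emeasure_eq_measure ennreal_mult[symmetric] ennreal_leI)
  qed
  also have "\<dots> < \<infinity>"
    by (simp add: suminf_ennreal2[OF bnd_nonneg \<open>summable bnd\<close>])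
  finally show ?thesis by (simp add: h_def)
qed

lemma ennreal_SUP_less_top_bound:
  fixes f :: "'i \<Rightarrow> ennreal"
  assumes "(SUP i\<in>I. f i) < \<infinity>"
  obtains S where "0 \<le> S" "\<And>i. i \<in> I \<Longrightarrow> f i \<le> ennreal S"
proof
  show "0 \<le> enn2real (SUP i\<in>I. f i)" by simp
  show "f i \<le> ennreal (enn2real (SUP i\<in>I. f i))" if "i \<in> I" for i
    using assms that by (simp add: SUP_upper less_top[symmetric])
qed

locale rv_family = prob_space M for M :: "'a measure" +
  fixes I :: "'i set" and X :: "'i \<Rightarrow> 'a \<Rightarrow> real"
  assumes index_nonempty: "I \<noteq> {}"
    and random_variable_X: "\<And>i. i \<in> I \<Longrightarrow> X i \<in> borel_measurable M"
begin

definition sup_tail :: "real \<Rightarrow> real" where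
  "sup_tail x = (SUP i\<in>I. prob {\<omega>\<in>space M. \<bar>X i \<omega>\<bar> > x})"

lemma tail_events: "i \<in> I \<Longrightarrow> {\<omega>\<in>space M. \<bar>X i \<omega>\<bar> > x} \<in> events"
  using random_variable_X by measurable

lemma bdd_above_tail_probs: "bdd_above ((\<lambda>i. prob {\<omega>\<in>space M. \<bar>X i \<omega>\<bar> > x}) ` I)"
  by (auto intro: bdd_aboveI[of _ 1])

lemma prob_tail_le_sup_tail: "i \<in> I \<Longrightarrow> prob {\<omega>\<in>space M. \<bar>X i \<omega>\<bar> > x} \<le> sup_tail x"
  unfolding sup_tail_def by (rule cSUP_upper[OF _ bdd_above_tail_probs])

lemma sup_tail_le:
  "(\<And>i. i \<in> I \<Longrightarrow> prob {\<omega>\<in>space M. \<bar>X i \<omega>\<bar> > x} \<le> c) \<Longrightarrow> sup_tail x \<le> c"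
  unfolding sup_tail_def using index_nonempty by (rule cSUP_least)

lemma sup_tail_nonneg: "0 \<le> sup_tail x"
proof -
  obtain i where "i \<in> I" using index_nonempty by blast
  then show ?thesis by (rule order.trans[OF measure_nonneg prob_tail_le_sup_tail])
qed

lemma sup_tail_antimono:
  assumes "x \<le> y"
  shows "sup_tail y \<le> sup_tail x"
proof (rule sup_tail_le)
  fix i assume "i \<in> I"
  have "prob {\<omega>\<in>space M. \<bar>X i \<omega>\<bar> > y} \<le> prob {\<omega>\<in>space M. \<bar>X i \<omega>\<bar> > x}"
    using assms by (intro finite_measure_mono tail_events[OF \<open>i \<in> I\<close>]) auto
  then show "prob {\<omega>\<in>space M. \<bar>X i \<omega>\<bar> > y} \<le> sup_tail x"
    using prob_tail_le_sup_tail[OF \<open>i \<in> I\<close>, of x] by linarith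
qed

lemma sup_tail_neg: "x < 0 \<Longrightarrow> sup_tail x = 1"
proof -
  assume "x < 0"
  then have "{\<omega>\<in>space M. \<bar>X i \<omega>\<bar> > x} = space M" for i by auto
  then show ?thesis using index_nonempty by (simp add: sup_tail_def prob_space)
qed

lemma sup_tail_continuous_at_right: "continuous (at_right a) sup_tail"
  unfolding continuous_within
proof (rule order_tendstoI)
  fix b assume "b < sup_tail a"
  then obtain i where i: "i \<in> I" "b < prob {\<omega>\<in>space M. \<bar>X i \<omega>\<bar> > a}"
    using less_cSUP_iff[OF index_nonempty bdd_above_tail_probs] unfolding sup_tail_def by blast
  have "continuous (at_right a) (\<lambda>x. prob {\<omega>\<in>space M. \<bar>X i \<omega>\<bar> > x})"
    using random_variable_X[OF i(1)] by (intro continuous_at_right_prob_greater) measurable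
  then have "\<forall>\<^sub>F x in at_right a. b < prob {\<omega>\<in>space M. \<bar>X i \<omega>\<bar> > x}"
    using i(2) by (auto simp: continuous_within order_tendsto_iff)
  then show "\<forall>\<^sub>F x in at_right a. b < sup_tail x"
    by (rule eventually_mono) (rule less_le_trans[OF _ prob_tail_le_sup_tail[OF i(1)]])
next
  fix b assume "sup_tail a < b"
  show "\<forall>\<^sub>F x in at_right a. sup_tail x < b"
    using eventually_at_right_less[of a]
    by (rule eventually_mono) (rule le_less_trans[OF sup_tail_antimono \<open>sup_tail a < b\<close>], simp)
qed

lemma sup_tail_mult_le:
  assumes "0 < g x" "\<And>y. x \<le> y \<Longrightarrow> g x \<le> g y" "0 \<le> S"
    and moment: "\<And>i. i \<in> I \<Longrightarrow> (\<integral>\<^sup>+ \<omega>. ennreal (g \<bar>X i \<omega>\<bar>) \<partial>M) \<le> ennreal S"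
  shows "sup_tail x * g x \<le> S"
proof -
  have "prob {\<omega>\<in>space M. \<bar>X i \<omega>\<bar> > x} * g x \<le> S" if "i \<in> I" for i
  proof -
    let ?A = "{\<omega>\<in>space M. \<bar>X i \<omega>\<bar> > x}"
    have "ennreal (g x) * emeasure M ?A = (\<integral>\<^sup>+ \<omega>. ennreal (g x) * indicator ?A \<omega> \<partial>M)"
      using tail_events[OF that] by (simp add: nn_integral_cmult_indicator)
    also have "\<dots> \<le> (\<integral>\<^sup>+ \<omega>. ennreal (g \<bar>X i \<omega>\<bar>) \<partial>M)"
      using assms(2) by (intro nn_integral_mono) (auto split: split_indicator intro: ennreal_leI)
    also have "\<dots> \<le> ennreal S" by (rule moment[OF that])
    finally have "ennreal (g x * prob ?A) \<le> ennreal S"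
      using \<open>0 < g x\<close> by (simp add: emeasure_eq_measure ennreal_mult)
    then show ?thesis using \<open>0 \<le> S\<close> by (simp add: mult.commute)
  qed
  then have "sup_tail x \<le> S / g x"
    using \<open>0 < g x\<close> by (intro sup_tail_le) (simp add: pos_le_divide_eq)
  then show ?thesis using \<open>0 < g x\<close> by (simp add: pos_le_divide_eq)
qed

lemma sup_tail_tendsto_zero:
  assumes "filterlim g at_top at_top" "\<forall>\<^sub>F x in at_top. sup_tail x * g x \<le> S"
  shows "(sup_tail \<longlongrightarrow> 0) at_top"
proof (rule tendsto_sandwich[of "\<lambda>_. 0" _ _ "\<lambda>x. S / g x"])
  show "\<forall>\<^sub>F x in at_top. sup_tail x \<le> S / g x"
    using assms(2) filterlim_at_top_dense[THEN iffD1, OF assms(1), rule_format, of 0]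
    by eventually_elim (simp add: pos_le_divide_eq)
  show "((\<lambda>x. S / g x) \<longlongrightarrow> 0) at_top"
    using assms(1) by (intro tendsto_divide_0[OF tendsto_const] filterlim_at_top_imp_at_infinity)
qed (auto simp: sup_tail_nonneg)

end

theorem proposition3p2:
  fixes M :: "'a measure" and I :: "'i set" and X :: "'i \<Rightarrow> 'a \<Rightarrow> real"
    and L :: "real \<Rightarrow> real" and A p :: real
  assumes "prob_space M"
    and "I \<noteq> {}"
    and "\<And>i. i \<in> I \<Longrightarrow> X i \<in> borel_measurable M"
    and "slowly_varying L"
    and "\<And>x. x \<ge> 0 \<Longrightarrow> L x > 0"
    and "continuous_on {0..} L"
    and "A > 0"
    and "\<And>x. x \<ge> A \<Longrightarrow> L differentiable (at x)"
    and "((\<lambda>x. x * deriv L x / L x) \<longlongrightarrow> 0) at_top"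
    and "p > 0"
    and "(SUP i\<in>I. \<integral>\<^sup>+ \<omega>. ennreal (\<bar>X i \<omega>\<bar> powr p * L \<bar>X i \<omega>\<bar> * Log \<bar>X i \<omega>\<bar>
                                    * (Log (Log \<bar>X i \<omega>\<bar>))\<^sup>2) \<partial>M) < \<infinity>"
  shows "\<exists>(N :: real measure) (Y :: real \<Rightarrow> real).
           prob_space N \<and> Y \<in> borel_measurable N \<and> (\<forall>\<omega>\<in>space N. Y \<omega> \<ge> 0) \<and>
           (\<forall>x::real. measure N {\<omega>\<in>space N. Y \<omega> \<le> x}
                = 1 - (SUP i\<in>I. measure M {\<omega>\<in>space M. \<bar>X i \<omega>\<bar> > x})) \<and>
           stoch_dominated M I X N Y \<and>
           (\<integral>\<^sup>+ \<omega>. ennreal (Y \<omega> powr p * L (Y \<omega>)) \<partial>N) < \<infinity>"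
proof -
  interpret rv_family M I X using assms(1-3) by (simp add: rv_family_def rv_family_axioms_def)
  obtain B where B: "B > 0" "\<And>x y. B \<le> x \<Longrightarrow> x \<le> y \<Longrightarrow> x powr p * L x \<le> y powr p * L y"
    using powr_mult_eventually_mono[OF assms(5,8-10)] by blast
  interpret powr_mult_increasing_from L p B using assms(5) B by unfold_locales
  obtain S where S: "0 \<le> S"
      "\<And>i. i \<in> I \<Longrightarrow> (\<integral>\<^sup>+ \<omega>. ennreal (moment_weight p L \<bar>X i \<omega>\<bar>) \<partial>M) \<le> ennreal S"
    using assms(11) unfolding moment_weight_def by (rule ennreal_SUP_less_top_bound) blast
  have markov: "sup_tail x * moment_weight p L x \<le> S" if "B \<le> x" for x
    using that B(1) assms(5)[of x]
    by (intro sup_tail_mult_le[OF moment_weight_pos _ S] moment_weight_mono) auto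
  then have "(sup_tail \<longlongrightarrow> 0) at_top"
    by (intro sup_tail_tendsto_zero[OF filterlim_moment_weight_at_top])
      (auto simp: eventually_at_top_linorder)
  then obtain N :: "real measure" and Y where N: "prob_space N" "Y \<in> borel_measurable N"
      "\<And>\<omega>. \<omega> \<in> space N \<Longrightarrow> 0 \<le> Y \<omega>"
      "\<And>x. measure N {\<omega>\<in>space N. Y \<omega> \<le> x} = 1 - sup_tail x"
      "\<And>x. measure N {\<omega>\<in>space N. x < Y \<omega>} = sup_tail x"
    using exists_nonneg_random_variable_with_tail[OF sup_tail_antimono
        sup_tail_continuous_at_right sup_tail_neg] by blast
  have "(\<integral>\<^sup>+ \<omega>. ennreal (Y \<omega> powr p * L (Y \<omega>)) \<partial>N) < \<infinity>"
    by (rule prob_space.nn_integral_powr_mult_finite_if_tail_bound[OF N(1,2,3) assms(4-6) _ B(2)])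
      (use \<open>p > 0\<close> N(5) markov in auto)
  moreover have "{\<omega>\<in>space N. \<bar>Y \<omega>\<bar> > t} = {\<omega>\<in>space N. t < Y \<omega>}" for t
    using N(3) by auto
  ultimately show ?thesis
    unfolding stoch_dominated_def
    by (intro exI[of _ N] exI[of _ Y] conjI) (auto simp: N sup_tail_def)
qed

end
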